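(* For any bisimulation congruence $(C_1,C_2)$ on $(\Sigma^\ast,\Sigma^{\ast+})$, we have $(C_1,C_2)=T(M(C_1,C_2))$, where $M(C_1,C_2)$ is the pointed lasso automaton $(\Sigma^\ast/C_1,\Sigma^{\ast+}/C_2,[\epsilon]_{C_1},\sigma_1,\sigma_2,\sigma_3)$ with $\sigma_1([w])(a)=[wa]$, $\sigma_2([w])(a)=[(w,a)]$, $\sigma_3([(u,v)])(a)=[(u,va)]$, and $T$ of a pointed lasso automaton is $(\ker\delta_1^\sharp,\ker\delta^\sharp)$.
   Context: $\Sigma$ is a finite alphabet, $\Sigma^{\ast+}=\Sigma^\ast\times\Sigma^+$ the lassos. A pointed lasso automaton is $(X_1,X_2,\overline{x},\delta_1,\delta_2,\delta_3)$ with disjoint $X_1,X_2$, $\overline{x}\in X_1$, $\delta_1:X_1\times\Sigma\to X_1$, $\delta_2:X_1\times\Sigma\to X_2$, $\delta_3:X_2\times\Sigma\to X_2$; extend $\delta_1,\delta_3$ to words, set $\delta_\circ(x,av)=\delta_3(\delta_2(x,a),v)$ for $x\in X_1$ and $\delta(x,(u,v))=\delta_\circ(\delta_1(x,u),v)$. $\ker\delta_1^\sharp=\{(u,v)\mid\forall x\in X_1:\delta_1(x,u)=\delta_1(x,v)\}$, $\ker\delta^\sharp=\{((u,v),(u',v'))\mid\forall x\in X_1:\delta(x,(u,v))=\delta(x,(u',v'))\}$. A bisimulation congruence is a pair $(C_1,C_2)$ of equivalence relations on $\Sigma^\ast$ and $\Sigma^{\ast+}$ such that: $C_1$ is a monoid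 congruence on $\Sigma^\ast$; $(w,w')\in C_1$ and $((u,v),(u',v'))\in C_2$ imply $((wu,v),(w'u',v'))\in C_2$; $(u,u')\in C_1$ implies $(ua,u'a)\in C_1$ and $((u,a),(u',a))\in C_2$; $((u,v),(u',v'))\in C_2$ implies $((u,va),(u',v'a))\in C_2$ (these conditions make $M(C_1,C_2)$ well defined). *)

theory Defs
  imports Main
begin

definition lassos :: "('a list \<times> 'a list) set" where
  "lassos = {(u, v). v \<noteq> []}"

record ('s1, 's2, 'a) pla =
  X1 :: "'s1 set"
  X2 :: "'s2 set"
  xbar :: 's1
  d1 :: "'s1 \<Rightarrow> 'a \<Rightarrow> 's1"
  d2 :: "'s1 \<Rightarrow> 'a \<Rightarrow> 's2"
  d3 :: "'s2 \<Rightarrow> 'a \<Rightarrow> 's2"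

definition pla_wf :: "('s1, 's2, 'a) pla \<Rightarrow> bool" where
  "pla_wf A \<longleftrightarrow> xbar A \<in> X1 A
     \<and> (\<forall>x\<in>X1 A. \<forall>a. d1 A x a \<in> X1 A \<and> d2 A x a \<in> X2 A)
     \<and> (\<forall>y\<in>X2 A. \<forall>a. d3 A y a \<in> X2 A)"

definition d1w :: "('s1, 's2, 'a) pla \<Rightarrow> 's1 \<Rightarrow> 'a list \<Rightarrow> 's1" where
  "d1w A x u = foldl (d1 A) x u"

definition d3w :: "('s1, 's2, 'a) pla \<Rightarrow> 's2 \<Rightarrow> 'a list \<Rightarrow> 's2" where
  "d3w A y u = foldl (d3 A) y u"

text \<open>delta_circ(x, a v) = delta3(delta2(x,a), v) (only meaningful for nonempty words).\<close>
definition dcirc :: "('s1, 's2, 'a) pla \<Rightarrow> 's1 \<Rightarrow> 'a list \<Rightarrow> 's2" where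
  "dcirc A x w = d3w A (d2 A x (hd w)) (tl w)"

definition dlasso :: "('s1, 's2, 'a) pla \<Rightarrow> 's1 \<Rightarrow> 'a list \<times> 'a list \<Rightarrow> 's2" where
  "dlasso A x uv = dcirc A (d1w A x (fst uv)) (snd uv)"

definition ker1 :: "('s1, 's2, 'a) pla \<Rightarrow> ('a list \<times> 'a list) set" where
  "ker1 A = {(u, v). \<forall>x\<in>X1 A. d1w A x u = d1w A x v}"

definition ker2 :: "('s1, 's2, 'a) pla \<Rightarrow> (('a list \<times> 'a list) \<times> ('a list \<times> 'a list)) set" where
  "ker2 A = {(p, q). p \<in> lassos \<and> q \<in> lassos \<and> (\<forall>x\<in>X1 A. dlasso A x p = dlasso A x q)}"

definition T :: "('s1, 's2, 'a) pla \<Rightarrow> ('a list \<times> 'a list) set \<times> (('a list \<times> 'a list) \<times> ('a list \<times> 'a list)) set" where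
  "T A = (ker1 A, ker2 A)"

definition bisim_cong :: "('a list \<times> 'a list) set \<Rightarrow> (('a list \<times> 'a list) \<times> ('a list \<times> 'a list)) set \<Rightarrow> bool" where
  "bisim_cong C1 C2 \<longleftrightarrow>
     equiv UNIV C1 \<and> equiv lassos C2
     \<and> (\<forall>w w' u u'. (w, w') \<in> C1 \<longrightarrow> (u, u') \<in> C1 \<longrightarrow> (w @ u, w' @ u') \<in> C1)
     \<and> (\<forall>w w' u v u' v'. (w, w') \<in> C1 \<longrightarrow> ((u, v), (u', v')) \<in> C2 \<longrightarrow> ((w @ u, v), (w' @ u', v')) \<in> C2)
     \<and> (\<forall>u u' a. (u, u') \<in> C1 \<longrightarrow> (u @ [a], u' @ [a]) \<in> C1 \<and> ((u, [a]), (u', [a])) \<in> C2)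
     \<and> (\<forall>u v u' v' a. ((u, v), (u', v')) \<in> C2 \<longrightarrow> ((u, v @ [a]), (u', v' @ [a])) \<in> C2)"

text \<open>The transitions act on a class by
  taking the C-closure of the image of its representatives (which is exactly the class
  of [wa], [(w,a)], [(u,va)] resp., since (C1,C2) is a bisimulation congruence).\<close>
definition M :: "('a list \<times> 'a list) set \<Rightarrow> (('a list \<times> 'a list) \<times> ('a list \<times> 'a list)) set
    \<Rightarrow> ('a list set, ('a list \<times> 'a list) set, 'a) pla" where
  "M C1 C2 = \<lparr> X1 = UNIV // C1, X2 = lassos // C2, xbar = C1 `` {[]},
     d1 = (\<lambda>X a. C1 `` ((\<lambda>w. w @ [a]) ` X)),
     d2 = (\<lambda>X a. C2 `` ((\<lambda>w. (w, [a])) ` X)),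
     d3 = (\<lambda>Y a. C2 `` ((\<lambda>(u, v). (u, v @ [a])) ` Y)) \<rparr>"

end

theory Submission
  imports Defs
begin

text \<open>In \<open>M(C\<^sub>1,C\<^sub>2)\<close> the run from a class \<open>[w]\<close> reads a word \<open>u\<close> into \<open>[wu]\<close> and a lasso
  \<open>(u,v)\<close> into \<open>[(wu,v)]\<close>. Hence two words (lassos) lie in the kernel iff all their
  left translates are congruent. Since \<open>C\<^sub>1\<close> and \<open>C\<^sub>2\<close> are closed under left translation, this
  holds for congruent pairs, and translating by the empty word gives the converse.\<close>

lemma
  assumes "bisim_cong C1 C2"
  shows bisim_cong_equiv1: "equiv UNIV C1"
    and bisim_cong_equiv2: "equiv lassos C2"
    and bisim_cong_append1: "(w, w') \<in> C1 \<Longrightarrow> (u, u') \<in> C1 \<Longrightarrow> (w @ u, w' @ u') \<in> C1"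
    and bisim_cong_prefix2:
      "(w, w') \<in> C1 \<Longrightarrow> ((u, v), (u', v')) \<in> C2 \<Longrightarrow> ((w @ u, v), (w' @ u', v')) \<in> C2"
    and bisim_cong_snoc1: "(u, u') \<in> C1 \<Longrightarrow> (u @ [a], u' @ [a]) \<in> C1"
    and bisim_cong_letter2: "(u, u') \<in> C1 \<Longrightarrow> ((u, [a]), (u', [a])) \<in> C2"
    and bisim_cong_snoc2: "((u, v), (u', v')) \<in> C2 \<Longrightarrow> ((u, v @ [a]), (u', v' @ [a])) \<in> C2"
  using assms unfolding bisim_cong_def by blast+

lemma Image_image_class:
  assumes "trans s" "(x, x) \<in> r" "\<And>y. (x, y) \<in> r \<Longrightarrow> (f x, f y) \<in> s"
  shows "s `` (f ` (r `` {x})) = s `` {f x}"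
  using assms by (blast dest: transD)

lemma equiv_refl_on:
  "equiv A r \<Longrightarrow> x \<in> A \<Longrightarrow> (x, x) \<in> r"
  by (auto simp: equiv_def refl_on_def)

lemma equiv_trans: "equiv A r \<Longrightarrow> trans r"
  by (simp add: equiv_def)

context
  fixes C1 C2
  assumes bc: "bisim_cong C1 C2"
begin

lemma d1_M_class: "d1 (M C1 C2) (C1 `` {w}) a = C1 `` {w @ [a]}"
  unfolding M_def using bisim_cong_equiv1[OF bc]
  by (simp add: Image_image_class equiv_refl_on equiv_trans bisim_cong_snoc1[OF bc])

lemma d2_M_class: "d2 (M C1 C2) (C1 `` {w}) a = C2 `` {(w, [a])}"
  unfolding M_def using bisim_cong_equiv1[OF bc] bisim_cong_equiv2[OF bc]
  by (simp add: Image_image_class equiv_refl_on equiv_trans bisim_cong_letter2[OF bc])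

lemma d3_M_class: "d3 (M C1 C2) (C2 `` {(u, b # v)}) a = C2 `` {(u, b # v @ [a])}"
proof -
  have "d3 (M C1 C2) (C2 `` {(u, b # v)}) a
      = C2 `` ((\<lambda>(u, v). (u, v @ [a])) ` (C2 `` {(u, b # v)}))"
    by (simp add: M_def)
  also have "\<dots> = C2 `` {(u, b # v @ [a])}"
    using bisim_cong_equiv2[OF bc]
    by (subst Image_image_class)
      (auto simp: equiv_refl_on equiv_trans lassos_def dest: bisim_cong_snoc2[OF bc])
  finally show ?thesis .
qed

lemma d1w_M_class: "d1w (M C1 C2) (C1 `` {w}) u = C1 `` {w @ u}"
  unfolding d1w_def by (induction u arbitrary: w) (simp_all add: d1_M_class)

lemma d3w_M_class: "d3w (M C1 C2) (C2 `` {(u, b # v)}) x = C2 `` {(u, b # v @ x)}"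
  unfolding d3w_def by (induction x arbitrary: v) (simp_all add: d3_M_class)

lemma dlasso_M_class:
  assumes "v \<noteq> []"
  shows "dlasso (M C1 C2) (C1 `` {w}) (u, v) = C2 `` {(w @ u, v)}"
proof -
  obtain b x where "v = b # x" using assms by (cases v) auto
  then show ?thesis
    using d3w_M_class[of "w @ u" b "[]" x]
    by (simp add: dlasso_def dcirc_def d1w_M_class d2_M_class)
qed

lemma ball_X1_M: "(\<forall>X \<in> X1 (M C1 C2). P X) \<longleftrightarrow> (\<forall>w. P (C1 `` {w}))"
  by (simp add: M_def quotient_def)

lemma ker1_M: "ker1 (M C1 C2) = C1"
proof -
  note equiv1 = bisim_cong_equiv1[OF bc]
  have "(u, v) \<in> ker1 (M C1 C2) \<longleftrightarrow> (\<forall>w. C1 `` {w @ u} = C1 `` {w @ v})" for u v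
    by (simp add: ker1_def ball_X1_M d1w_M_class)
  also have "\<dots> u v \<longleftrightarrow> (u, v) \<in> C1" for u v
  proof
    assume "\<forall>w. C1 `` {w @ u} = C1 `` {w @ v}"
    then have "C1 `` {u} = C1 `` {v}" by (metis append_Nil)
    then show "(u, v) \<in> C1" using equiv_class_eq_iff[OF equiv1] by blast
  next
    assume "(u, v) \<in> C1"
    then have "(w @ u, w @ v) \<in> C1" for w
      using bc equiv1 by (simp add: bisim_cong_append1 equiv_refl_on)
    then show "\<forall>w. C1 `` {w @ u} = C1 `` {w @ v}"
      using equiv_class_eq[OF equiv1] by blast
  qed
  finally show ?thesis by auto
qed

lemma ker2_M: "ker2 (M C1 C2) = C2"
proof -
  note equiv2 = bisim_cong_equiv2[OF bc]
  have "((u, v), (u', v')) \<in> ker2 (M C1 C2) \<longleftrightarrow>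
      v \<noteq> [] \<and> v' \<noteq> [] \<and> (\<forall>w. C2 `` {(w @ u, v)} = C2 `` {(w @ u', v')})" for u v u' v'
    by (simp add: ker2_def ball_X1_M dlasso_M_class lassos_def cong: conj_cong)
  also have "\<dots> u v u' v' \<longleftrightarrow> ((u, v), (u', v')) \<in> C2" for u v u' v'
  proof
    assume "v \<noteq> [] \<and> v' \<noteq> [] \<and> (\<forall>w. C2 `` {(w @ u, v)} = C2 `` {(w @ u', v')})"
    then have "(u, v) \<in> lassos" "C2 `` {(u, v)} = C2 `` {(u', v')}"
      by (simp_all add: lassos_def) (metis append_Nil)
    then show "((u, v), (u', v')) \<in> C2" using equiv_class_eq_iff[OF equiv2] by blast
  next
    assume uv: "((u, v), (u', v')) \<in> C2"
    then have "v \<noteq> [] \<and> v' \<noteq> []"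
      using equiv_type[OF equiv2] by (auto simp: lassos_def)
    moreover have "((w @ u, v), (w @ u', v')) \<in> C2" for w
      using uv bisim_cong_equiv1[OF bc] by (simp add: bisim_cong_prefix2[OF bc] equiv_refl_on)
    ultimately show "v \<noteq> [] \<and> v' \<noteq> [] \<and> (\<forall>w. C2 `` {(w @ u, v)} = C2 `` {(w @ u', v')})"
      using equiv_class_eq[OF equiv2] by blast
  qed
  finally show ?thesis by auto
qed

end

theorem mainTheorem13:
  fixes C1 :: "('a::finite list \<times> 'a list) set"
    and C2 :: "(('a list \<times> 'a list) \<times> ('a list \<times> 'a list)) set"
  assumes "bisim_cong C1 C2"
  shows "(C1, C2) = T (M C1 C2)"
  using assms by (simp add: T_def ker1_M ker2_M)

end
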